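(* Let $n\ge2$ be even. If a variety $\mathcal V$ is $(n+1)$-distributive, then $\mathcal V$ is $2n$-modular, i.e. it satisfies $\alpha(\beta\circ\alpha\gamma\circ\beta)\subseteq\alpha\beta\circ_{2n}\alpha\gamma$ for all congruences $\alpha,\beta,\gamma$.
   Context: $\circ$ is relational composition, juxtaposition is intersection. For relations $X,Y$ and $m\ge1$, $X\circ_m Y$ denotes $X\circ Y\circ X\circ\cdots$ with $m$ factors. A variety is $(n+1)$-distributive if all its algebras satisfy $\alpha(\beta\circ\gamma)\subseteq\alpha\beta\circ_{n+1}\alpha\gamma$ for all congruences $\alpha,\beta,\gamma$; equivalently, it has Jónsson terms $j_0,\dots,j_{n+1}$: ternary terms with $x=j_0(x,y,z)$, $x=j_i(x,y,x)$ for all $i$, $j_i(x,z,z)=j_{i+1}(x,z,z)$ for odd $i$, $j_i(x,x,z)=j_{i+1}(x,x,z)$ for even $i$, and $j_{n+1}(x,y,z)=z$. *)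

theory Defs
  imports Main
begin

datatype ('f, 'v) trm = Var 'v | Fn 'f "('f, 'v) trm list"

fun wf_trm :: "('f \<Rightarrow> nat) \<Rightarrow> ('f, 'v) trm \<Rightarrow> bool" where
  "wf_trm ar (Var v) = True"
| "wf_trm ar (Fn f ts) = (length ts = ar f \<and> (\<forall>t\<in>set ts. wf_trm ar t))"

fun vars_trm :: "('f, 'v) trm \<Rightarrow> 'v set" where
  "vars_trm (Var v) = {v}"
| "vars_trm (Fn f ts) = (\<Union>t\<in>set ts. vars_trm t)"

fun eval :: "('f \<Rightarrow> 'a list \<Rightarrow> 'a) \<Rightarrow> ('v \<Rightarrow> 'a) \<Rightarrow> ('f, 'v) trm \<Rightarrow> 'a" where
  "eval ops \<rho> (Var v) = \<rho> v"
| "eval ops \<rho> (Fn f ts) = ops f (map (eval ops \<rho>) ts)"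

definition is_algebra :: "('f \<Rightarrow> nat) \<Rightarrow> 'a set \<Rightarrow> ('f \<Rightarrow> 'a list \<Rightarrow> 'a) \<Rightarrow> bool" where
  "is_algebra ar A ops \<longleftrightarrow>
     (\<forall>f xs. length xs = ar f \<and> set xs \<subseteq> A \<longrightarrow> ops f xs \<in> A)"

text \<open>A model of the identities E; the variety is the class of all such models.\<close>
definition is_model :: "('f \<Rightarrow> nat) \<Rightarrow> (('f, nat) trm \<times> ('f, nat) trm) set
     \<Rightarrow> 'a set \<Rightarrow> ('f \<Rightarrow> 'a list \<Rightarrow> 'a) \<Rightarrow> bool" where
  "is_model ar E A ops \<longleftrightarrow> is_algebra ar A ops \<and>
     (\<forall>(s, t)\<in>E. \<forall>\<rho>. range \<rho> \<subseteq> A \<longrightarrow> eval ops \<rho> s = eval ops \<rho> t)"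

definition is_congruence :: "('f \<Rightarrow> nat) \<Rightarrow> 'a set \<Rightarrow> ('f \<Rightarrow> 'a list \<Rightarrow> 'a) \<Rightarrow> 'a rel \<Rightarrow> bool" where
  "is_congruence ar A ops \<theta> \<longleftrightarrow> equiv A \<theta> \<and>
     (\<forall>f xs ys. length xs = ar f \<and> length ys = ar f \<and> list_all2 (\<lambda>x y. (x, y) \<in> \<theta>) xs ys
        \<longrightarrow> (ops f xs, ops f ys) \<in> \<theta>)"

text \<open>alt X Y m = X o Y o X o ... with m factors (m \<ge> 1).\<close>
fun alt :: "'a rel \<Rightarrow> 'a rel \<Rightarrow> nat \<Rightarrow> 'a rel" where
  "alt X Y 0 = Id"
| "alt X Y (Suc 0) = X"
| "alt X Y (Suc (Suc k)) = X O alt Y X (Suc k)"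

definition tern :: "('f \<Rightarrow> 'a list \<Rightarrow> 'a) \<Rightarrow> ('f, nat) trm \<Rightarrow> 'a \<Rightarrow> 'a \<Rightarrow> 'a \<Rightarrow> 'a" where
  "tern ops t a b c = eval ops (\<lambda>v. if v = 0 then a else if v = 1 then b else c) t"

definition jonsson_in :: "('f \<Rightarrow> nat) \<Rightarrow> 'a set \<Rightarrow> ('f \<Rightarrow> 'a list \<Rightarrow> 'a) \<Rightarrow> nat
     \<Rightarrow> (nat \<Rightarrow> ('f, nat) trm) \<Rightarrow> bool" where
  "jonsson_in ar A ops n j \<longleftrightarrow>
     (\<forall>a\<in>A. \<forall>b\<in>A. \<forall>c\<in>A.
        tern ops (j 0) a b c = a
      \<and> (\<forall>i\<le>n+1. tern ops (j i) a b a = a)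
      \<and> (\<forall>i\<le>n. odd i \<longrightarrow> tern ops (j i) a c c = tern ops (j (Suc i)) a c c)
      \<and> (\<forall>i\<le>n. even i \<longrightarrow> tern ops (j i) a a c = tern ops (j (Suc i)) a a c)
      \<and> tern ops (j (n+1)) a b c = c)"

definition jonsson_terms :: "('f \<Rightarrow> nat) \<Rightarrow> (nat \<Rightarrow> ('f, nat) trm) \<Rightarrow> nat \<Rightarrow> bool" where
  "jonsson_terms ar j n \<longleftrightarrow> (\<forall>i\<le>n+1. wf_trm ar (j i) \<and> vars_trm (j i) \<subseteq> {0, 1, 2})"

end

(* Write J i x y z for j_i(x,y,z). Given (a,d) in alpha and a beta b (alpha gamma) c beta d, the path
     a = J 0 a b d  beta  J 1 a b d  gamma  J 1 a c d  beta  J 2 a c d  gamma  J 2 a b d  beta  ...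
       ... gamma  J (n-1) a c d  beta  J n b c d  gamma  J n b b d = d
   has 2n steps alternating between beta and gamma. A beta-step from J i to J (Suc i) passes through
   J i a a d = J (Suc i) a a d (i even, using a beta b) or J i a d d = J (Suc i) a d d (i odd, using
   c beta d); n even makes n - 1 odd and J n b b d = J (n+1) b b d = d. Every point lies in the alpha-class
   of a, since J i a x d alpha J i a x a = a and J n b c d alpha J n c c d = d. *)

theory Submission
  imports Defs
begin

lemma congruence_refl: "is_congruence ar A ops \<theta> \<Longrightarrow> x \<in> A \<Longrightarrow> (x, x) \<in> \<theta>"
  by (simp add: is_congruence_def equiv_def refl_on_def)

lemma congruence_sym: "is_congruence ar A ops \<theta> \<Longrightarrow> (x, y) \<in> \<theta> \<Longrightarrow> (y, x) \<in> \<theta>"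
  by (auto simp: is_congruence_def equiv_def dest: symD)

lemma congruence_trans:
  "is_congruence ar A ops \<theta> \<Longrightarrow> (x, y) \<in> \<theta> \<Longrightarrow> (y, z) \<in> \<theta> \<Longrightarrow> (x, z) \<in> \<theta>"
  by (auto simp: is_congruence_def equiv_def dest: transD)

lemma congruence_carrier: "is_congruence ar A ops \<theta> \<Longrightarrow> (x, y) \<in> \<theta> \<Longrightarrow> x \<in> A \<and> y \<in> A"
  by (auto simp: is_congruence_def equiv_def)

lemma eval_congruence:
  assumes "is_congruence ar A ops \<theta>" and "wf_trm ar t" and "\<forall>v\<in>vars_trm t. (\<rho> v, \<sigma> v) \<in> \<theta>"
  shows "(eval ops \<rho> t, eval ops \<sigma> t) \<in> \<theta>"
  using assms(2,3)
proof (induction t)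
  case (Var v)
  then show ?case by simp
next
  case (Fn f ts)
  have "list_all2 (\<lambda>x y. (x, y) \<in> \<theta>) (map (eval ops \<rho>) ts) (map (eval ops \<sigma>) ts)"
    using Fn by (auto simp: list_all2_conv_all_nth)
  with assms(1) Fn.prems show ?case by (simp add: is_congruence_def)
qed

lemma tern_congruence:
  assumes "is_congruence ar A ops \<theta>" and "wf_trm ar t" and "vars_trm t \<subseteq> {0, 1, 2}"
    and "(x, x') \<in> \<theta>" and "(y, y') \<in> \<theta>" and "(z, z') \<in> \<theta>"
  shows "(tern ops t x y z, tern ops t x' y' z') \<in> \<theta>"
  unfolding tern_def using assms by (intro eval_congruence) auto

lemma alt_Suc_Suc: "alt X Y (Suc (Suc m)) = X O Y O alt X Y m"
  by (cases m) auto

lemma alt_even: "alt X Y (2 * m) = (X O Y) ^^ m"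
proof (induction m)
  case (Suc m)
  have "alt X Y (2 * Suc m) = X O Y O alt X Y (2 * m)"
    using alt_Suc_Suc[of X Y "2 * m"] by (simp del: alt.simps)
  with Suc show ?case by (simp add: relpow_commute[symmetric] O_assoc)
qed simp

locale jonsson_algebra =
  fixes ar :: "'f \<Rightarrow> nat" and A :: "'a set" and ops :: "'f \<Rightarrow> 'a list \<Rightarrow> 'a"
    and n :: nat and j :: "nat \<Rightarrow> ('f, nat) trm"
  assumes jonsson: "jonsson_in ar A ops n j"
    and terms: "jonsson_terms ar j n"
begin

definition J :: "nat \<Rightarrow> 'a \<Rightarrow> 'a \<Rightarrow> 'a \<Rightarrow> 'a" where
  "J i = tern ops (j i)"

lemma J_0: "x \<in> A \<Longrightarrow> y \<in> A \<Longrightarrow> z \<in> A \<Longrightarrow> J 0 x y z = x"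
  using jonsson by (simp add: jonsson_in_def J_def)

lemma J_outer_eq: "i \<le> n + 1 \<Longrightarrow> x \<in> A \<Longrightarrow> y \<in> A \<Longrightarrow> J i x y x = x"
  using jonsson by (simp add: jonsson_in_def J_def)

lemma J_odd: "i \<le> n \<Longrightarrow> odd i \<Longrightarrow> x \<in> A \<Longrightarrow> z \<in> A \<Longrightarrow> J i x z z = J (Suc i) x z z"
  using jonsson by (simp add: jonsson_in_def J_def)

lemma J_even: "i \<le> n \<Longrightarrow> even i \<Longrightarrow> x \<in> A \<Longrightarrow> z \<in> A \<Longrightarrow> J i x x z = J (Suc i) x x z"
  using jonsson by (simp add: jonsson_in_def J_def)

lemma J_last: "x \<in> A \<Longrightarrow> y \<in> A \<Longrightarrow> z \<in> A \<Longrightarrow> J (n + 1) x y z = z"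
  using jonsson by (simp add: jonsson_in_def J_def)

lemma J_congruence:
  "is_congruence ar A ops \<theta> \<Longrightarrow> i \<le> n + 1 \<Longrightarrow> (x, x') \<in> \<theta> \<Longrightarrow> (y, y') \<in> \<theta> \<Longrightarrow> (z, z') \<in> \<theta>
    \<Longrightarrow> (J i x y z, J i x' y' z') \<in> \<theta>"
  using terms unfolding J_def jonsson_terms_def by (blast intro: tern_congruence)

lemma J_Suc_even_congruent:
  assumes \<theta>: "is_congruence ar A ops \<theta>" and "i \<le> n" "even i" and xy: "(x, y) \<in> \<theta>" and "z \<in> A"
  shows "(J i x y z, J (Suc i) x y z) \<in> \<theta>"
proof -
  have "x \<in> A" using congruence_carrier[OF \<theta> xy] ..
  note x = congruence_refl[OF \<theta> \<open>x \<in> A\<close>] and z = congruence_refl[OF \<theta> \<open>z \<in> A\<close>]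
  have "(J i x y z, J i x x z) \<in> \<theta>"
    using J_congruence[OF \<theta> _ x congruence_sym[OF \<theta> xy] z] \<open>i \<le> n\<close> by simp
  also have "J i x x z = J (Suc i) x x z"
    using J_even assms \<open>x \<in> A\<close> by blast
  finally show ?thesis
    using J_congruence[OF \<theta> _ x xy z] \<open>i \<le> n\<close> congruence_trans[OF \<theta>] by simp
qed

lemma J_Suc_odd_congruent:
  assumes \<theta>: "is_congruence ar A ops \<theta>" and "i \<le> n" "odd i" and yz: "(y, z) \<in> \<theta>" and "x \<in> A"
  shows "(J i x y z, J (Suc i) x y z) \<in> \<theta>"
proof -
  have "z \<in> A" using congruence_carrier[OF \<theta> yz] ..
  note x = congruence_refl[OF \<theta> \<open>x \<in> A\<close>] and z = congruence_refl[OF \<theta> \<open>z \<in> A\<close>]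
  have "(J i x y z, J i x z z) \<in> \<theta>"
    using J_congruence[OF \<theta> _ x yz z] \<open>i \<le> n\<close> by simp
  also have "J i x z z = J (Suc i) x z z"
    using J_odd assms \<open>z \<in> A\<close> by blast
  finally show ?thesis
    using J_congruence[OF \<theta> _ x congruence_sym[OF \<theta> yz] z] \<open>i \<le> n\<close> congruence_trans[OF \<theta>]
    by simp
qed

lemma J_diagonal_last: "even n \<Longrightarrow> x \<in> A \<Longrightarrow> z \<in> A \<Longrightarrow> J n x x z = z"
  using J_even[of n x z] J_last[of x x z] by simp

lemma J_congruent_first:
  assumes \<theta>: "is_congruence ar A ops \<theta>" and "i \<le> n + 1" and xz: "(x, z) \<in> \<theta>" and "y \<in> A"
  shows "(x, J i x y z) \<in> \<theta>"
proof -
  have "x \<in> A" using congruence_carrier[OF \<theta> xz] ..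
  have "(J i x y x, J i x y z) \<in> \<theta>"
    using J_congruence[OF \<theta> \<open>i \<le> n + 1\<close> congruence_refl[OF \<theta> \<open>x \<in> A\<close>]
        congruence_refl[OF \<theta> \<open>y \<in> A\<close>] xz] .
  then show ?thesis
    using J_outer_eq[OF \<open>i \<le> n + 1\<close> \<open>x \<in> A\<close> \<open>y \<in> A\<close>] by simp
qed

context
  fixes \<alpha> \<beta> \<gamma> :: "'a rel" and a b c d :: 'a
  assumes cong_\<alpha>: "is_congruence ar A ops \<alpha>"
    and cong_\<beta>: "is_congruence ar A ops \<beta>"
    and cong_\<gamma>: "is_congruence ar A ops \<gamma>"
    and ad: "(a, d) \<in> \<alpha>" and ab: "(a, b) \<in> \<beta>" and bc: "(b, c) \<in> \<alpha> \<inter> \<gamma>" and cd: "(c, d) \<in> \<beta>"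
begin

lemma in_carrier: "a \<in> A" "b \<in> A" "c \<in> A" "d \<in> A"
  using congruence_carrier[OF cong_\<beta> ab] congruence_carrier[OF cong_\<beta> cd] by auto

lemma relcomp_within_\<alpha>_class:
  assumes "(a, p) \<in> \<alpha>" "(a, q) \<in> \<alpha>" "(a, r) \<in> \<alpha>" and "(p, q) \<in> \<beta>" "(q, r) \<in> \<gamma>"
  shows "(p, r) \<in> (\<alpha> \<inter> \<beta>) O (\<alpha> \<inter> \<gamma>)"
proof -
  have "(p, q) \<in> \<alpha>" "(q, r) \<in> \<alpha>"
    using assms(1-3) congruence_sym[OF cong_\<alpha>] congruence_trans[OF cong_\<alpha>] by blast+
  with assms(4,5) show ?thesis by blast
qed

lemma J_in_\<alpha>_class: "i \<le> n + 1 \<Longrightarrow> x \<in> A \<Longrightarrow> (a, J i a x d) \<in> \<alpha>"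
  using J_congruent_first[OF cong_\<alpha> _ ad] .

lemma J_middle_\<gamma>: "i \<le> n + 1 \<Longrightarrow> (J i a b d, J i a c d) \<in> \<gamma>"
  using J_congruence[OF cong_\<gamma> _ congruence_refl[OF cong_\<gamma>] _ congruence_refl[OF cong_\<gamma>]]
    bc in_carrier by blast

lemma J_step_even:
  assumes "i \<le> n" "even i"
  shows "(J i a b d, J (Suc i) a c d) \<in> (\<alpha> \<inter> \<beta>) O (\<alpha> \<inter> \<gamma>)"
proof (rule relcomp_within_\<alpha>_class)
  show "(J i a b d, J (Suc i) a b d) \<in> \<beta>"
    using J_Suc_even_congruent[OF cong_\<beta> assms ab] in_carrier by blast
  show "(J (Suc i) a b d, J (Suc i) a c d) \<in> \<gamma>"
    using J_middle_\<gamma> assms by simp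
qed (use assms in_carrier J_in_\<alpha>_class in auto)

lemma J_step_odd:
  assumes "i \<le> n" "odd i"
  shows "(J i a c d, J (Suc i) a b d) \<in> (\<alpha> \<inter> \<beta>) O (\<alpha> \<inter> \<gamma>)"
proof (rule relcomp_within_\<alpha>_class)
  show "(J i a c d, J (Suc i) a c d) \<in> \<beta>"
    using J_Suc_odd_congruent[OF cong_\<beta> assms cd] in_carrier by blast
  show "(J (Suc i) a c d, J (Suc i) a b d) \<in> \<gamma>"
    using J_middle_\<gamma> assms congruence_sym[OF cong_\<gamma>] by simp
qed (use assms in_carrier J_in_\<alpha>_class in auto)

lemma J_step_last:
  assumes "even n" "0 < n"
  shows "(J (n - 1) a c d, d) \<in> (\<alpha> \<inter> \<beta>) O (\<alpha> \<inter> \<gamma>)"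
proof (rule relcomp_within_\<alpha>_class)
  have "(J (n - 1) a c d, J n a c d) \<in> \<beta>"
    using J_Suc_odd_congruent[OF cong_\<beta> _ _ cd, of "n - 1" a] assms in_carrier by simp
  moreover have "(J n a c d, J n b c d) \<in> \<beta>"
    using J_congruence[OF cong_\<beta> _ ab congruence_refl[OF cong_\<beta>] congruence_refl[OF cong_\<beta>]]
      in_carrier by simp
  ultimately show "(J (n - 1) a c d, J n b c d) \<in> \<beta>"
    using congruence_trans[OF cong_\<beta>] by blast
  have "(J n b c d, J n b b d) \<in> \<gamma>"
    using J_congruence[OF cong_\<gamma> _ congruence_refl[OF cong_\<gamma>] congruence_sym[OF cong_\<gamma>]
        congruence_refl[OF cong_\<gamma>]] bc in_carrier by simp
  then show "(J n b c d, d) \<in> \<gamma>"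
    using J_diagonal_last[OF \<open>even n\<close>] in_carrier by simp
  have "(J n b c d, J n c c d) \<in> \<alpha>"
    using J_congruence[OF cong_\<alpha> _ _ congruence_refl[OF cong_\<alpha>] congruence_refl[OF cong_\<alpha>]]
      bc in_carrier by simp
  then have "(J n b c d, a) \<in> \<alpha>"
    using J_diagonal_last[OF \<open>even n\<close>] in_carrier congruence_sym[OF cong_\<alpha> ad]
      congruence_trans[OF cong_\<alpha>] by simp
  then show "(a, J n b c d) \<in> \<alpha>"
    by (rule congruence_sym[OF cong_\<alpha>])
qed (use ad in_carrier J_in_\<alpha>_class in auto)

end

lemma inter_relcomp_subset_alt:
  assumes "even n" "0 < n"
    and cong: "is_congruence ar A ops \<alpha>" "is_congruence ar A ops \<beta>" "is_congruence ar A ops \<gamma>"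
  shows "\<alpha> \<inter> (\<beta> O (\<alpha> \<inter> \<gamma>) O \<beta>) \<subseteq> alt (\<alpha> \<inter> \<beta>) (\<alpha> \<inter> \<gamma>) (2 * n)"
proof
  fix p assume "p \<in> \<alpha> \<inter> (\<beta> O (\<alpha> \<inter> \<gamma>) O \<beta>)"
  then obtain a b c d where p: "p = (a, d)"
    and abcd: "(a, d) \<in> \<alpha>" "(a, b) \<in> \<beta>" "(b, c) \<in> \<alpha> \<inter> \<gamma>" "(c, d) \<in> \<beta>"
    by blast
  \<comment> \<open>u i is the point reached after 2 i steps of the path\<close>
  define u where "u i = (if i < n then J i a (if odd i then c else b) d else d)" for i
  have "(u i, u (Suc i)) \<in> (\<alpha> \<inter> \<beta>) O (\<alpha> \<inter> \<gamma>)" if "i < n" for i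
  proof (cases "Suc i < n")
    case True
    then show ?thesis
      using J_step_even[OF cong abcd, of i] J_step_odd[OF cong abcd, of i] by (simp add: u_def)
  next
    case False
    with that \<open>even n\<close> have "i = n - 1" by simp
    then show ?thesis
      using J_step_last[OF cong abcd assms(1,2)] \<open>even n\<close> \<open>0 < n\<close> by (simp add: u_def)
  qed
  moreover have "u 0 = a" "u n = d"
    using J_0 in_carrier[OF cong abcd] \<open>0 < n\<close> by (simp_all add: u_def)
  ultimately have "(a, d) \<in> ((\<alpha> \<inter> \<beta>) O (\<alpha> \<inter> \<gamma>)) ^^ n"
    unfolding relpow_fun_conv by blast
  then show "p \<in> alt (\<alpha> \<inter> \<beta>) (\<alpha> \<inter> \<gamma>) (2 * n)"
    by (simp add: p alt_even)
qed

end

theorem proposition6p1: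
  fixes ar :: "'f \<Rightarrow> nat"
    and E :: "(('f, nat) trm \<times> ('f, nat) trm) set"
    and n :: nat
    and j :: "nat \<Rightarrow> ('f, nat) trm"
    and A :: "'a set" and ops :: "'f \<Rightarrow> 'a list \<Rightarrow> 'a"
  assumes "n \<ge> 2" and "even n"
    and "jonsson_terms ar j n"
    and "\<And>(B :: 'a set) opsB. is_model ar E B opsB \<Longrightarrow> jonsson_in ar B opsB n j"
    and "is_model ar E A ops"
    and "is_congruence ar A ops \<alpha>" and "is_congruence ar A ops \<beta>"
    and "is_congruence ar A ops \<gamma>"
  shows "\<alpha> \<inter> (\<beta> O (\<alpha> \<inter> \<gamma>) O \<beta>) \<subseteq> alt (\<alpha> \<inter> \<beta>) (\<alpha> \<inter> \<gamma>) (2 * n)"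
proof -
  interpret jonsson_algebra ar A ops n j
    using assms(3) assms(4)[OF assms(5)] by unfold_locales
  show ?thesis
    using inter_relcomp_subset_alt assms(1,2,6-8) by simp
qed

end
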